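(* Let $n\geq 2$. Identify $H^\ast(BSO(2n-1))$ with the subring $\mathbb{Z}/2[\widehat{\omega_2},\dots,\widehat{\omega_{2n-1}}]$ of $H^\ast(BSO(2n))=\mathbb{Z}/2[\widehat{\omega_2},\dots,\widehat{\omega_{2n}}]$, so that $H^\ast(BSO(2n))\cong\bigoplus_{k\ge0}H^\ast(BSO(2n-1))\,\widehat{\omega_{2n}}^{k}$. Then for every $k\geq1$, $H^\ast(BSO(2n-1))\,\widehat{\omega_{2n}}^{k}$ is an $E$-submodule of $\tilde{H}^\ast(BSO(2n))$, and $\tilde{H}^\ast(BSO(2n-1))$ is an $E$-submodule of $\tilde{H}^\ast(BSO(2n))$.
   Context: Cohomology is with $\mathbb{Z}/2$ coefficients; $\widehat{\omega_i}$ denotes the $i$-th Stiefel–Whitney class. $E=\mathbb{Z}/2\langle Q_0,Q_1\rangle$ is the exterior subalgebra of the mod 2 Steenrod algebra generated by the Milnor primitives $Q_0=Sq^1$ and $Q_1=Sq^3+Sq^2Sq^1$, acting on cohomology via Steenrod operations. *)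

theory Defs
  imports "HOL-Library.Poly_Mapping" "HOL-Library.Z2"
begin

text \<open>Mod 2 cohomology H^*(BSO(m)) = Z/2[w_2,...,w_m], modelled as polynomials over the
  field bit = Z/2 in variables indexed by nat (variable i is the Stiefel-Whitney class w_i).\<close>

type_synonym mon = "nat \<Rightarrow>\<^sub>0 nat"
type_synonym poly = "mon \<Rightarrow>\<^sub>0 bit"

definition Var :: "nat \<Rightarrow> poly" where
  "Var i = Poly_Mapping.single (Poly_Mapping.single i 1) 1"

definition sw :: "nat \<Rightarrow> nat \<Rightarrow> poly" where
  "sw m i = (if i = 0 then 1 else if 2 \<le> i \<and> i \<le> m then Var i else 0)"

definition HBSO :: "nat \<Rightarrow> poly set" where
  "HBSO m = {p::poly. \<forall>mo \<in> Poly_Mapping.keys p. Poly_Mapping.keys mo \<subseteq> {2..m}}"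

definition HBSO_red :: "nat \<Rightarrow> poly set" where
  "HBSO_red m = {p \<in> HBSO m. Poly_Mapping.lookup p 0 = 0}"

definition mdeg :: "mon \<Rightarrow> nat" where
  "mdeg mo = (\<Sum>i\<in>Poly_Mapping.keys mo. i * Poly_Mapping.lookup mo i)"

definition hpart :: "nat \<Rightarrow> poly \<Rightarrow> poly" where
  "hpart d p = (\<Sum>mo\<in>Poly_Mapping.keys p. if mdeg mo = d then Poly_Mapping.single mo (Poly_Mapping.lookup p mo) else 0)"

text \<open>Wu formula in BSO(m): Sq^j w_i = sum_{t=0}^j binom(i-j+t-1, t) w_{j-t} w_{i+t} (j \<le> i),
  Sq^j w_i = 0 for j > i.\<close>
definition SqW :: "nat \<Rightarrow> nat \<Rightarrow> nat \<Rightarrow> poly" where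
  "SqW m j i = (if j \<le> i then
      (\<Sum>t=0..j. of_nat ((i - j + t - 1) choose t) * sw m (j - t) * sw m (i + t)) else 0)"

text \<open>Total Steenrod square of w_i, and (by the Cartan formula) of a monomial in the w_i.\<close>
definition TSqW :: "nat \<Rightarrow> nat \<Rightarrow> poly" where
  "TSqW m i = (\<Sum>j=0..i. SqW m j i)"

definition TSqMon :: "nat \<Rightarrow> mon \<Rightarrow> poly" where
  "TSqMon m mo = (\<Prod>i\<in>Poly_Mapping.keys mo. TSqW m i ^ Poly_Mapping.lookup mo i)"

definition Sq :: "nat \<Rightarrow> nat \<Rightarrow> poly \<Rightarrow> poly" where
  "Sq m j p = (\<Sum>mo\<in>Poly_Mapping.keys p. Poly_Mapping.single 0 (Poly_Mapping.lookup p mo) * hpart (mdeg mo + j) (TSqMon m mo))"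

definition Q0 :: "nat \<Rightarrow> poly \<Rightarrow> poly" where
  "Q0 m p = Sq m 1 p"

definition Q1 :: "nat \<Rightarrow> poly \<Rightarrow> poly" where
  "Q1 m p = Sq m 3 p + Sq m 2 (Sq m 1 p)"

text \<open>E-submodule of reduced H^*(BSO(m)): an additive subgroup (Z/2-subspace) closed under
  Q_0 and Q_1 (which generate E as an algebra).\<close>
definition E_submodule :: "nat \<Rightarrow> poly set \<Rightarrow> bool" where
  "E_submodule m M \<longleftrightarrow> M \<subseteq> HBSO_red m \<and> 0 \<in> M \<and> (\<forall>x\<in>M. \<forall>y\<in>M. x + y \<in> M)
     \<and> (\<forall>x\<in>M. Q0 m x \<in> M \<and> Q1 m x \<in> M)"

end

(* Q_0 and Q_1 act on H^*(BSO(m)) as derivations: for Q_0 = Sq^1 this is the Cartan formula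
   together with Sq^0 = id, and for Q_1 = Sq^3 + Sq^2 Sq^1 the Adem relation Sq^1 Sq^1 = 0 makes
   the mixed terms of the Cartan formula cancel in pairs. A derivation preserves a subring as soon
   as it maps its generators into it. By the Wu formula, Q_0 w_i and Q_1 w_i for 2 <= i <= 2n-1
   contain w_2n only with even binomial coefficients, so H^*(BSO(2n-1)) is preserved. Moreover
   Q_0 w_2n = 0 and Q_1 w_2n = w_3 w_2n, hence Q (q w_2n^k) = (Q q + k s q) w_2n^k with s = 0 or
   s = w_3, which lies in H^*(BSO(2n-1)) w_2n^k again. *)

theory Submission
  imports Defs
begin

lemma poly_mapping_induct_single_add [case_names zero insert]:
  fixes P :: "('a \<Rightarrow>\<^sub>0 'b::monoid_add) \<Rightarrow> bool"
  assumes "P 0"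
    and "\<And>f a b. a \<notin> Poly_Mapping.keys f \<Longrightarrow> b \<noteq> 0 \<Longrightarrow> P f \<Longrightarrow> P (Poly_Mapping.single a b + f)"
  shows "P p"
proof (induct p rule: Poly_Mapping.update_induct)
  case const
  then show ?case using assms(1) by simp
next
  case (update f a b)
  have "Poly_Mapping.update a b f = Poly_Mapping.single a b + f"
    using update(1) by (intro poly_mapping_eqI)
      (auto simp: Poly_Mapping.lookup_update lookup_add Poly_Mapping.lookup_single when_def in_keys_iff)
  then show ?case using assms(2) update by simp
qed

lemma keys_single_add:
  fixes f :: "'a \<Rightarrow>\<^sub>0 'b::monoid_add"
  assumes "a \<notin> Poly_Mapping.keys f" "b \<noteq> 0"
  shows "Poly_Mapping.keys (Poly_Mapping.single a b + f) = insert a (Poly_Mapping.keys f)"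
  using assms by (auto simp: in_keys_iff lookup_add Poly_Mapping.lookup_single when_def split: if_splits)

lemma poly_mapping_bilinear_eqI:
  fixes F G :: "('a::comm_monoid_add \<Rightarrow>\<^sub>0 'b::semiring_0) \<Rightarrow> ('a \<Rightarrow>\<^sub>0 'b) \<Rightarrow> 'c::comm_monoid_add"
  assumes "\<And>f f' g. F (f + f') g = F f g + F f' g" "\<And>f g g'. F f (g + g') = F f g + F f g'"
    and "\<And>g. F 0 g = 0" "\<And>f. F f 0 = 0"
    and "\<And>f f' g. G (f + f') g = G f g + G f' g" "\<And>f g g'. G f (g + g') = G f g + G f g'"
    and "\<And>g. G 0 g = 0" "\<And>f. G f 0 = 0"
    and single: "\<And>x y c e. c \<noteq> 0 \<Longrightarrow> e \<noteq> 0 \<Longrightarrow>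
      F (Poly_Mapping.single x c) (Poly_Mapping.single y e) = G (Poly_Mapping.single x c) (Poly_Mapping.single y e)"
  shows "F f g = G f g"
proof (induct f rule: poly_mapping_induct_single_add)
  case (insert f a b)
  have "F (Poly_Mapping.single a b) g = G (Poly_Mapping.single a b) g"
    by (induct g rule: poly_mapping_induct_single_add) (simp_all add: assms insert(2))
  then show ?case using insert by (simp add: assms)
qed (simp add: assms)

lemma poly_add_self [simp]: "(x::poly) + x = 0"
proof (intro poly_mapping_eqI)
  have "(b::bit) + b = 0" for b by (cases b) simp_all
  then show "Poly_Mapping.lookup (x + x) mo = Poly_Mapping.lookup 0 mo" for mo
    by (simp only: lookup_add) simp
qed

lemma poly_two [simp]: "(2::poly) = 0"
  by (metis one_add_one poly_add_self)

lemma of_nat_poly: "(of_nat c :: poly) = (if even c then 0 else 1)"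
  by (induct c) (auto simp: add.commute)

lemma lookup_mult_zero: "Poly_Mapping.lookup ((f::poly) * g) 0 = Poly_Mapping.lookup f 0 * Poly_Mapping.lookup g 0"
proof (rule poly_mapping_bilinear_eqI[where F = "\<lambda>f g. Poly_Mapping.lookup (f * g) 0"])
  fix x y :: mon and c e :: bit
  have "x + y = 0 \<longleftrightarrow> x = 0 \<and> y = 0"
    by (metis add_is_0 lookup_add lookup_zero poly_mapping_eqI add_0)
  then show "Poly_Mapping.lookup (Poly_Mapping.single x c * Poly_Mapping.single y e) 0
      = Poly_Mapping.lookup (Poly_Mapping.single x c) 0 * Poly_Mapping.lookup (Poly_Mapping.single y e) 0"
    by (auto simp: mult_single Poly_Mapping.lookup_single when_def)
qed (simp_all only: distrib_left distrib_right lookup_add mult_zero_left mult_zero_right lookup_zero)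

lemma lookup_power_zero: "Poly_Mapping.lookup ((f::poly) ^ k) 0 = Poly_Mapping.lookup f 0 ^ k"
  by (induct k) (simp_all add: lookup_mult_zero)

lemma lookup_Var_zero: "Poly_Mapping.lookup (Var i) 0 = 0"
  by (simp add: Var_def Poly_Mapping.lookup_single when_def poly_mapping_eq_iff fun_eq_iff)

section \<open>Homogeneous components\<close>

lemma mdeg_add: "mdeg (a + b) = mdeg a + mdeg b"
  unfolding mdeg_def by (rule setsum_keys_plus_distrib) (simp_all add: distrib_left)

lemma mdeg_zero [simp]: "mdeg 0 = 0"
  by (simp add: mdeg_def)

lemma mdeg_single [simp]: "mdeg (Poly_Mapping.single i k) = i * k"
  by (simp add: mdeg_def)

lemma lookup_hpart:
  "Poly_Mapping.lookup (hpart d p) mo = (if mdeg mo = d then Poly_Mapping.lookup p mo else 0)"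
proof -
  have "Poly_Mapping.lookup (hpart d p) mo
      = (\<Sum>x\<in>Poly_Mapping.keys p. if x = mo \<and> mdeg mo = d then Poly_Mapping.lookup p mo else 0)"
    unfolding hpart_def lookup_sum
    by (intro sum.cong) (auto simp: Poly_Mapping.lookup_single when_def)
  then show ?thesis
    by (cases "mo \<in> Poly_Mapping.keys p") (auto simp: in_keys_iff)
qed

lemma hpart_add: "hpart d (p + q) = hpart d p + hpart d q"
  by (intro poly_mapping_eqI) (simp add: lookup_hpart lookup_add)

lemma hpart_zero [simp]: "hpart d 0 = 0"
  by (simp add: hpart_def)

lemma hpart_sum: "hpart d (sum F K) = (\<Sum>k\<in>K. hpart d (F k))"
  by (intro poly_mapping_eqI) (simp add: lookup_hpart lookup_sum)

lemma hpart_single: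
  "hpart d (Poly_Mapping.single mo c) = (if mdeg mo = d then Poly_Mapping.single mo c else 0)"
  by (intro poly_mapping_eqI) (auto simp: lookup_hpart Poly_Mapping.lookup_single when_def)

lemma hpart_mult: "hpart d (f * g) = (\<Sum>a=0..d. hpart a f * hpart (d - a) g)"
proof (rule poly_mapping_bilinear_eqI[where F = "\<lambda>f g. hpart d (f * g)"])
  fix x y :: mon and c e :: bit
  have "(\<Sum>a=0..d. hpart a (Poly_Mapping.single x c) * hpart (d - a) (Poly_Mapping.single y e))
      = (\<Sum>a=0..d. if a = mdeg x then
           (if mdeg y = d - mdeg x then Poly_Mapping.single (x + y) (c * e) else 0) else 0)"
    by (intro sum.cong) (auto simp: hpart_single mult_single)
  then show "hpart d (Poly_Mapping.single x c * Poly_Mapping.single y e)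
      = (\<Sum>a=0..d. hpart a (Poly_Mapping.single x c) * hpart (d - a) (Poly_Mapping.single y e))"
    by (auto simp: hpart_single mult_single mdeg_add)
qed (simp_all add: hpart_add algebra_simps sum.distrib)

definition homogeneous :: "nat \<Rightarrow> poly \<Rightarrow> bool" where
  "homogeneous d f \<longleftrightarrow> (\<forall>e. e \<noteq> d \<longrightarrow> hpart e f = 0)"

definition vanishes_below :: "nat \<Rightarrow> poly \<Rightarrow> bool" where
  "vanishes_below d f \<longleftrightarrow> (\<forall>e<d. hpart e f = 0)"

lemma homogeneous_single: "homogeneous (mdeg mo) (Poly_Mapping.single mo c)"
  by (simp add: homogeneous_def hpart_single)

lemma homogeneous_one: "homogeneous 0 1"
  using homogeneous_single[of 0 1] by simp

lemma homogeneous_of_nat: "homogeneous 0 (of_nat c)"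
  using homogeneous_one by (simp add: of_nat_poly homogeneous_def)

lemma homogeneous_sum: "(\<And>k. k \<in> K \<Longrightarrow> homogeneous d (F k)) \<Longrightarrow> homogeneous d (sum F K)"
  by (simp add: homogeneous_def hpart_sum)

lemma homogeneous_mult:
  assumes "homogeneous a f" "homogeneous b g"
  shows "homogeneous (a + b) (f * g)"
  unfolding homogeneous_def hpart_mult
proof (intro allI impI sum.neutral ballI)
  fix e x assume "e \<noteq> a + b" "x \<in> {0..e}"
  then have "x \<noteq> a \<or> e - x \<noteq> b" by auto
  then show "hpart x f * hpart (e - x) g = 0"
    using assms by (auto simp: homogeneous_def)
qed

lemma hpart_homogeneous: "homogeneous d f \<Longrightarrow> hpart d f = f"
  by (intro poly_mapping_eqI) (metis homogeneous_def lookup_hpart lookup_zero)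

lemma vanishes_below_homogeneous: "homogeneous d f \<Longrightarrow> d' \<le> d \<Longrightarrow> vanishes_below d' f"
  by (simp add: homogeneous_def vanishes_below_def)

lemma vanishes_below_sum:
  "(\<And>k. k \<in> K \<Longrightarrow> vanishes_below d (F k)) \<Longrightarrow> vanishes_below d (sum F K)"
  by (simp add: vanishes_below_def hpart_sum)

lemma vanishes_below_mult:
  assumes "vanishes_below a f" "vanishes_below b g"
  shows "vanishes_below (a + b) (f * g)"
  unfolding vanishes_below_def hpart_mult
proof (intro allI impI sum.neutral ballI)
  fix e x assume "e < a + b" "x \<in> {0..e}"
  then have "x < a \<or> e - x < b" by auto
  then show "hpart x f * hpart (e - x) g = 0"
    using assms by (auto simp: vanishes_below_def)
qed

lemma vanishes_below_power: "vanishes_below d f \<Longrightarrow> vanishes_below (k * d) (f ^ k)"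
  by (induct k) (auto intro: vanishes_below_homogeneous[OF homogeneous_one]
      dest: vanishes_below_mult[of d f])

lemma vanishes_below_prod:
  "finite K \<Longrightarrow> (\<And>i. i \<in> K \<Longrightarrow> vanishes_below (D i) (F i)) \<Longrightarrow> vanishes_below (sum D K) (prod F K)"
  by (induct K rule: finite_induct)
    (simp_all add: vanishes_below_homogeneous[OF homogeneous_one] vanishes_below_mult)

section \<open>Steenrod squares and the Cartan formula\<close>

lemma Sq_add: "Sq m j (p + q) = Sq m j p + Sq m j q"
  unfolding Sq_def
  by (rule setsum_keys_plus_distrib) (simp_all only: single_add distrib_right single_zero mult_zero_left)

lemma Sq_zero [simp]: "Sq m j 0 = 0"
  by (simp add: Sq_def)

lemma Sq_single:
  "Sq m j (Poly_Mapping.single mo c) = Poly_Mapping.single 0 c * hpart (mdeg mo + j) (TSqMon m mo)"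
  by (cases "c = 0") (simp_all add: Sq_def)

lemma Sq_monomial: "Sq m j (Poly_Mapping.single mo 1) = hpart (mdeg mo + j) (TSqMon m mo)"
  by (simp add: Sq_single)

lemma Sq_one: "Sq m j 1 = (if j = 0 then 1 else 0)"
  using Sq_monomial[of m j 0] hpart_single[of j 0 1] by (simp add: TSqMon_def)

lemma lookup_Sq_zero: "0 < j \<Longrightarrow> Poly_Mapping.lookup (Sq m j p) 0 = 0"
  unfolding Sq_def lookup_sum
  by (intro sum.neutral) (simp add: lookup_mult_zero lookup_hpart)

lemma TSqMon_add: "TSqMon m (a + b) = TSqMon m a * TSqMon m b"
proof -
  let ?K = "Poly_Mapping.keys a \<union> Poly_Mapping.keys b"
  have TSqMon_eq: "TSqMon m mo = (\<Prod>i\<in>?K. TSqW m i ^ Poly_Mapping.lookup mo i)"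
    if "Poly_Mapping.keys mo \<subseteq> ?K" for mo
    unfolding TSqMon_def using that by (intro prod.mono_neutral_left) (auto simp: in_keys_iff)
  show ?thesis
    using TSqMon_eq[of "a + b"] TSqMon_eq[of a] TSqMon_eq[of b] keys_add[of a b]
    by (simp add: lookup_add power_add prod.distrib)
qed

lemma homogeneous_sw: "homogeneous i (sw m i)"
  using homogeneous_single[of "Poly_Mapping.single i 1" 1] homogeneous_one
  by (auto simp: sw_def Var_def homogeneous_def)

lemma homogeneous_SqW: "homogeneous (i + j) (SqW m j i)"
proof -
  have "homogeneous (i + j) (of_nat ((i - j + t - 1) choose t) * sw m (j - t) * sw m (i + t))"
    if "t \<le> j" for t
  proof -
    from that have "i + j = 0 + (j - t) + (i + t)" by simp
    then show ?thesis by (metis homogeneous_mult homogeneous_of_nat homogeneous_sw)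
  qed
  then show ?thesis
    unfolding SqW_def by (auto intro!: homogeneous_sum simp: homogeneous_def[of _ 0])
qed

lemma vanishes_below_TSqMon: "vanishes_below (mdeg mo) (TSqMon m mo)"
proof -
  have "vanishes_below i (TSqW m i)" for i
    unfolding TSqW_def by (intro vanishes_below_sum vanishes_below_homogeneous[OF homogeneous_SqW]) simp
  then have "vanishes_below (i * k) (TSqW m i ^ k)" for i k
    using vanishes_below_power by (simp add: mult.commute)
  then show ?thesis
    unfolding TSqMon_def mdeg_def by (intro vanishes_below_prod) simp_all
qed

lemma Cartan_formula_monomial:
  "Sq m j (Poly_Mapping.single (a + b) 1)
    = (\<Sum>i=0..j. Sq m i (Poly_Mapping.single a 1) * Sq m (j - i) (Poly_Mapping.single b 1))"
proof -
  let ?A = "TSqMon m a" and ?B = "TSqMon m b" and ?da = "mdeg a" and ?db = "mdeg b"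
  let ?f = "\<lambda>e. hpart e ?A * hpart (?da + ?db + j - e) ?B"
  have "Sq m j (Poly_Mapping.single (a + b) 1) = (\<Sum>e=0..?da + ?db + j. ?f e)"
    by (simp add: Sq_monomial mdeg_add TSqMon_add hpart_mult)
  \<comment> \<open>the total square of a monomial of degree d has no terms of degree below d\<close>
  also have "\<dots> = (\<Sum>e=?da..?da + j. ?f e)"
  proof (rule sum.mono_neutral_right)
    show "\<forall>e\<in>{0..?da + ?db + j} - {?da..?da + j}. ?f e = 0"
    proof
      fix e assume "e \<in> {0..?da + ?db + j} - {?da..?da + j}"
      then have "e < ?da \<or> ?da + ?db + j - e < ?db" by auto
      then show "?f e = 0"
        using vanishes_below_TSqMon[of a m] vanishes_below_TSqMon[of b m]
        unfolding vanishes_below_def by auto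
    qed
  qed auto
  also have "\<dots> = (\<Sum>i=0..j. ?f (i + ?da))"
    using sum.shift_bounds_cl_nat_ivl[of ?f 0 ?da j] by (simp add: add.commute)
  also have "\<dots> = (\<Sum>i=0..j. Sq m i (Poly_Mapping.single a 1) * Sq m (j - i) (Poly_Mapping.single b 1))"
    by (intro sum.cong) (auto simp: Sq_monomial add.commute)
  finally show ?thesis .
qed

lemma Cartan_formula: "Sq m j (p * q) = (\<Sum>i=0..j. Sq m i p * Sq m (j - i) q)"
proof (rule poly_mapping_bilinear_eqI[where F = "\<lambda>p q. Sq m j (p * q)"])
  fix x y :: mon and c e :: bit
  assume "c \<noteq> 0" "e \<noteq> 0"
  then show "Sq m j (Poly_Mapping.single x c * Poly_Mapping.single y e)
      = (\<Sum>i=0..j. Sq m i (Poly_Mapping.single x c) * Sq m (j - i) (Poly_Mapping.single y e))"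
    by (simp add: mult_single Cartan_formula_monomial)
qed (simp_all add: Sq_add algebra_simps sum.distrib)

lemma Sq_Var: "Sq m j (Var i) = SqW m j i"
proof -
  have "Sq m j (Var i) = hpart (i + j) (TSqW m i)"
    by (simp add: Var_def Sq_monomial TSqMon_def)
  also have "\<dots> = (\<Sum>j'=0..i. if j' = j then SqW m j' i else 0)"
    unfolding TSqW_def hpart_sum
    using hpart_homogeneous[OF homogeneous_SqW] homogeneous_SqW
    by (intro sum.cong refl) (auto simp: homogeneous_def)
  also have "\<dots> = SqW m j i"
    by (simp add: SqW_def)
  finally show ?thesis .
qed

section \<open>The subring H^*(BSO(m)) and derivations on it\<close>

lemma HBSO_zero [simp]: "0 \<in> HBSO m"
  by (simp add: HBSO_def)

lemma HBSO_one [simp]: "1 \<in> HBSO m"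
  by (simp add: HBSO_def)

lemma HBSO_add: "p \<in> HBSO m \<Longrightarrow> q \<in> HBSO m \<Longrightarrow> p + q \<in> HBSO m"
  using keys_add[of p q] by (auto simp: HBSO_def)

lemma HBSO_mult: "p \<in> HBSO m \<Longrightarrow> q \<in> HBSO m \<Longrightarrow> p * q \<in> HBSO m"
  unfolding HBSO_def
proof safe
  fix mo i
  assume p: "\<forall>mo\<in>Poly_Mapping.keys p. Poly_Mapping.keys mo \<subseteq> {2..m}"
    and q: "\<forall>mo\<in>Poly_Mapping.keys q. Poly_Mapping.keys mo \<subseteq> {2..m}"
    and "mo \<in> Poly_Mapping.keys (p * q)" and i: "i \<in> Poly_Mapping.keys mo"
  then obtain a b where "mo = a + b" "a \<in> Poly_Mapping.keys p" "b \<in> Poly_Mapping.keys q"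
    using keys_mult[of p q] by blast
  with i keys_add[of a b] p q show "i \<in> {2..m}" by blast
qed

lemma HBSO_sum: "(\<And>k. k \<in> K \<Longrightarrow> F k \<in> HBSO m) \<Longrightarrow> sum F K \<in> HBSO m"
  by (induct K rule: infinite_finite_induct) (auto simp: HBSO_add)

lemma HBSO_power: "p \<in> HBSO m \<Longrightarrow> p ^ k \<in> HBSO m"
  by (induct k) (auto simp: HBSO_mult)

lemma HBSO_of_nat [simp]: "of_nat c \<in> HBSO m"
  by (simp add: of_nat_poly)

lemma HBSO_mono: "m \<le> m' \<Longrightarrow> HBSO m \<subseteq> HBSO m'"
proof -
  assume "m \<le> m'"
  then have "{2..m} \<subseteq> {2..m'}" by auto
  then show ?thesis unfolding HBSO_def by blast
qed

lemma HBSO_Var: "i \<in> {2..m} \<Longrightarrow> Var i \<in> HBSO m"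
  by (simp add: HBSO_def Var_def)

lemma HBSO_sw: "sw m a \<in> HBSO m"
  by (simp add: sw_def HBSO_Var)

lemma HBSO_sw_below_top: "a \<noteq> m \<Longrightarrow> sw m a \<in> HBSO (m - 1)"
  by (auto simp: sw_def intro!: HBSO_Var)

lemma HBSO_SqW: "SqW m j i \<in> HBSO m"
  unfolding SqW_def by (auto intro!: HBSO_sum HBSO_mult HBSO_sw)

lemma HBSO_monomial: "Poly_Mapping.keys a \<subseteq> {2..m} \<Longrightarrow> Poly_Mapping.single a 1 \<in> HBSO m"
  by (simp add: HBSO_def)

lemma HBSO_monomial_induct:
  assumes "Poly_Mapping.keys a \<subseteq> {2..m}" and "P 1"
    and Var_mult: "\<And>i x. i \<in> {2..m} \<Longrightarrow> x \<in> HBSO m \<Longrightarrow> P x \<Longrightarrow> P (Var i * x)"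
  shows "P (Poly_Mapping.single a 1)"
  using assms(1)
proof (induct a rule: poly_mapping_induct_single_add)
  case zero
  then show ?case using \<open>P 1\<close> by simp
next
  case (insert f i e)
  from insert(4) have i: "i \<in> {2..m}" and f: "Poly_Mapping.keys f \<subseteq> {2..m}"
    unfolding keys_single_add[OF insert(1,2)] by auto
  have keys: "Poly_Mapping.keys (Poly_Mapping.single i e' + f) \<subseteq> {2..m}" for e'
  proof -
    have "Poly_Mapping.keys (Poly_Mapping.single i e') \<subseteq> {2..m}" using i by simp
    then show ?thesis using keys_add[of "Poly_Mapping.single i e'" f] f by blast
  qed
  have step: "Poly_Mapping.single (Poly_Mapping.single i (Suc e') + f) 1
      = Var i * Poly_Mapping.single (Poly_Mapping.single i e' + f) 1" for e'
    by (simp add: Var_def mult_single flip: add.assoc single_add)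
  have "P (Poly_Mapping.single (Poly_Mapping.single i e' + f) 1)" for e'
  proof (induct e')
    case 0
    then show ?case using insert(3) f by simp
  next
    case (Suc e')
    then show ?case unfolding step by (rule Var_mult[OF i HBSO_monomial[OF keys]])
  qed
  then show ?case .
qed

lemma HBSO_induct [consumes 1, case_names zero one add Var_mult]:
  assumes "p \<in> HBSO m" and "P 0" and "P 1"
    and add: "\<And>x y. x \<in> HBSO m \<Longrightarrow> y \<in> HBSO m \<Longrightarrow> P x \<Longrightarrow> P y \<Longrightarrow> P (x + y)"
    and Var_mult: "\<And>i x. i \<in> {2..m} \<Longrightarrow> x \<in> HBSO m \<Longrightarrow> P x \<Longrightarrow> P (Var i * x)"
  shows "P p"
  using \<open>p \<in> HBSO m\<close>
proof (induct p rule: poly_mapping_induct_single_add)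
  case (insert f a b)
  from insert(4) have a: "Poly_Mapping.keys a \<subseteq> {2..m}" and f: "f \<in> HBSO m"
    by (simp_all add: HBSO_def keys_single_add[OF insert(1,2)])
  from insert(2) have "b = 1" by simp
  then show ?case
    using add[OF HBSO_monomial[OF a] f HBSO_monomial_induct[OF a \<open>P 1\<close> Var_mult] insert(3)[OF f]]
    by simp
qed (simp add: \<open>P 0\<close>)

lemma Sq_0_eq_self: "x \<in> HBSO m \<Longrightarrow> Sq m 0 x = x"
proof (induct x rule: HBSO_induct)
  case (Var_mult i x)
  then show ?case by (simp add: Cartan_formula Sq_Var SqW_def sw_def)
qed (simp_all add: Sq_one Sq_add)

lemma Sq_HBSO: "x \<in> HBSO m \<Longrightarrow> Sq m j x \<in> HBSO m"
proof (induct x arbitrary: j rule: HBSO_induct)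
  case (Var_mult i x)
  then show ?case
    by (simp add: Cartan_formula Sq_Var) (intro HBSO_sum HBSO_mult HBSO_SqW, simp)
qed (simp_all add: Sq_one Sq_add HBSO_add)

(* keeps Sq m 1 and of_nat (i - 1) from being rewritten to Sq m (Suc 0) and of_nat i - 1 *)
declare One_nat_def [simp del] of_nat_diff [simp del]

lemma Cartan_formula_1: "Sq m 1 (p * q) = Sq m 0 p * Sq m 1 q + Sq m 1 p * Sq m 0 q"
  by (simp add: Cartan_formula eval_nat_numeral One_nat_def sum.atLeast0_atMost_Suc)

lemma Cartan_formula_2:
  "Sq m 2 (p * q) = Sq m 0 p * Sq m 2 q + Sq m 1 p * Sq m 1 q + Sq m 2 p * Sq m 0 q"
  by (simp add: Cartan_formula eval_nat_numeral One_nat_def sum.atLeast0_atMost_Suc)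

lemma Cartan_formula_3:
  "Sq m 3 (p * q) = Sq m 0 p * Sq m 3 q + Sq m 1 p * Sq m 2 q + Sq m 2 p * Sq m 1 q + Sq m 3 p * Sq m 0 q"
  by (simp add: Cartan_formula eval_nat_numeral One_nat_def sum.atLeast0_atMost_Suc)

lemma SqW_1: "1 \<le> i \<Longrightarrow> SqW m 1 i = of_nat (i - 1) * sw m (i + 1)"
  by (simp add: SqW_def sw_def choose_one One_nat_def sum.atLeast0_atMost_Suc)

definition derivation_on :: "nat \<Rightarrow> (poly \<Rightarrow> poly) \<Rightarrow> bool" where
  "derivation_on m D \<longleftrightarrow> (\<forall>x y. D (x + y) = D x + D y)
     \<and> (\<forall>x\<in>HBSO m. \<forall>y\<in>HBSO m. D (x * y) = D x * y + x * D y)"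

lemma Sq_1_mult: "x \<in> HBSO m \<Longrightarrow> y \<in> HBSO m \<Longrightarrow> Sq m 1 (x * y) = Sq m 1 x * y + x * Sq m 1 y"
  by (simp add: Cartan_formula_1 Sq_0_eq_self add.commute)

lemma derivation_on_Sq_1: "derivation_on m (Sq m 1)"
  by (simp add: derivation_on_def Sq_add Sq_1_mult)

lemma Sq_of_nat_mult: "Sq m j (of_nat c * x) = of_nat c * Sq m j x"
  by (simp add: of_nat_poly)

lemma Sq_1_sw: "Sq m 1 (sw m a) = of_nat (a - 1) * sw m (a + 1)"
proof (cases "a = 0 \<or> a = 1")
  case True
  then show ?thesis by (auto simp: sw_def Sq_one)
next
  case False
  then show ?thesis by (auto simp: sw_def Sq_Var SqW_1)
qed

lemma Sq_1_Sq_1_Var: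
  assumes "i \<in> {2..m}"
  shows "Sq m 1 (Sq m 1 (Var i)) = 0"
proof -
  have "Var i = sw m i" using assms by (simp add: sw_def)
  then have "Sq m 1 (Sq m 1 (Var i)) = of_nat ((i - 1) * i) * sw m (i + 1 + 1)"
    using assms by (simp add: Sq_1_sw Sq_of_nat_mult mult.assoc)
  moreover have "even ((i - 1) * i)" by simp
  ultimately show ?thesis by (simp add: of_nat_poly)
qed

lemma Sq_1_Sq_1: "x \<in> HBSO m \<Longrightarrow> Sq m 1 (Sq m 1 x) = 0"
proof (induct x rule: HBSO_induct)
  case (Var_mult i x)
  have Var: "Var i \<in> HBSO m" and Sq_1_Var: "Sq m 1 (Var i) \<in> HBSO m" and Sq_1_x: "Sq m 1 x \<in> HBSO m"
    using Var_mult(1,2) by (simp_all add: HBSO_Var Sq_HBSO)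
  have "Sq m 1 (Sq m 1 (Var i * x)) = Sq m 1 (Sq m 1 (Var i) * x + Var i * Sq m 1 x)"
    using Var Var_mult(2) by (simp add: Sq_1_mult)
  also have "\<dots> = Sq m 1 (Sq m 1 (Var i)) * x + Sq m 1 (Var i) * Sq m 1 x
       + (Sq m 1 (Var i) * Sq m 1 x + Var i * Sq m 1 (Sq m 1 x))"
    using Var Var_mult(2) Sq_1_Var Sq_1_x by (simp add: Sq_add Sq_1_mult)
  also have "\<dots> = 0"
    using Var_mult(1,3) by (simp add: Sq_1_Sq_1_Var)
  finally show ?case .
qed (simp_all add: Sq_one Sq_add)

lemma derivation_on_Q0: "derivation_on m (Q0 m)"
  using derivation_on_Sq_1[of m] by (simp add: Q0_def[abs_def])

lemma derivation_on_Q1: "derivation_on m (Q1 m)"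
  unfolding derivation_on_def
proof (intro conjI allI ballI)
  show "Q1 m (x + y) = Q1 m x + Q1 m y" for x y
    by (simp add: Q1_def Sq_add)
next
  fix x y assume x: "x \<in> HBSO m" and y: "y \<in> HBSO m"
  then have x1: "Sq m 1 x \<in> HBSO m" and y1: "Sq m 1 y \<in> HBSO m"
    by (simp_all add: Sq_HBSO)
  have Sq_3: "Sq m 3 (x * y) = x * Sq m 3 y + Sq m 1 x * Sq m 2 y + Sq m 2 x * Sq m 1 y + Sq m 3 x * y"
    using x y by (simp add: Cartan_formula_3 Sq_0_eq_self)
  have Sq_2_left: "Sq m 2 (Sq m 1 x * y) = Sq m 1 x * Sq m 2 y + Sq m 2 (Sq m 1 x) * y"
    using x y x1 by (simp add: Cartan_formula_2 Sq_0_eq_self Sq_1_Sq_1)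
  have Sq_2_right: "Sq m 2 (x * Sq m 1 y) = x * Sq m 2 (Sq m 1 y) + Sq m 2 x * Sq m 1 y"
    using x y y1 by (simp add: Cartan_formula_2 Sq_0_eq_self Sq_1_Sq_1)
  have Sq_2_Sq_1: "Sq m 2 (Sq m 1 (x * y)) = Sq m 2 (Sq m 1 x * y) + Sq m 2 (x * Sq m 1 y)"
    using x y by (simp add: Sq_1_mult Sq_add)
  \<comment> \<open>the mixed terms Sq^1 x Sq^2 y and Sq^2 x Sq^1 y occur twice and cancel mod 2\<close>
  have "Q1 m (x * y) - (Q1 m x * y + x * Q1 m y) = 2 * (Sq m 1 x * Sq m 2 y + Sq m 2 x * Sq m 1 y)"
    unfolding Q1_def Sq_3 Sq_2_Sq_1 Sq_2_left Sq_2_right by (simp add: algebra_simps)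
  then show "Q1 m (x * y) = Q1 m x * y + x * Q1 m y"
    by simp
qed

lemma derivation_on_one: "derivation_on m D \<Longrightarrow> D 1 = 0"
  using poly_add_self[of "D 1"] by (auto simp: derivation_on_def dest!: bspec[of _ _ 1])

lemma derivation_on_HBSO:
  assumes D: "derivation_on m D" and "m' \<le> m"
    and Var: "\<And>i. i \<in> {2..m'} \<Longrightarrow> D (Var i) \<in> HBSO m'"
    and "x \<in> HBSO m'"
  shows "D x \<in> HBSO m'"
  using \<open>x \<in> HBSO m'\<close>
proof (induct x rule: HBSO_induct)
  case zero
  have "D 0 = D 0 + D 0" using D by (metis derivation_on_def add_0)
  then show ?case by simp
next
  case one
  then show ?case using derivation_on_one[OF D] by simp
next
  case (add x y)
  then show ?case using D by (simp add: derivation_on_def HBSO_add)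
next
  case (Var_mult i x)
  have "Var i \<in> HBSO m" and "x \<in> HBSO m"
    using Var_mult(1,2) \<open>m' \<le> m\<close> HBSO_mono by (auto intro: HBSO_Var)
  then have "D (Var i * x) = D (Var i) * x + Var i * D x"
    using D by (simp add: derivation_on_def)
  then show ?case using Var_mult Var HBSO_Var by (simp add: HBSO_add HBSO_mult)
qed

lemma derivation_on_power:
  assumes D: "derivation_on m D" and "w \<in> HBSO m" and "D w = s * w"
  shows "D (w ^ k) = of_nat k * s * w ^ k"
proof (induct k)
  case 0
  then show ?case using derivation_on_one[OF D] by simp
next
  case (Suc k)
  have "D (w ^ Suc k) = D w * w ^ k + w * D (w ^ k)"
    using D \<open>w \<in> HBSO m\<close> HBSO_power by (simp add: derivation_on_def)
  then show ?case using Suc \<open>D w = s * w\<close> by (simp add: algebra_simps)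
qed

lemma derivation_on_mult_power:
  assumes D: "derivation_on m D" and "q \<in> HBSO m" "w \<in> HBSO m" "D w = s * w"
  shows "D (q * w ^ k) = (D q + of_nat k * s * q) * w ^ k"
proof -
  have "D (q * w ^ k) = D q * w ^ k + q * D (w ^ k)"
    using D assms(2,3) HBSO_power by (simp add: derivation_on_def)
  then show ?thesis
    using derivation_on_power[OF D assms(3,4)] by (simp add: algebra_simps)
qed

section \<open>The action of Q_0 and Q_1 on H^*(BSO(2n))\<close>

lemma even_choose_3: "even ((2 * a) choose 3)"
proof (induct a)
  case 0
  then show ?case by (simp add: numeral_3_eq_3)
next
  case (Suc a)
  have "(2 * Suc a) choose 3 = 2 * a + 2 * ((2 * a) choose 2) + ((2 * a) choose 3)"
    by (simp add: numeral_3_eq_3 numeral_2_eq_2 choose_one)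
  with Suc show ?case by simp
qed

lemma sw_0 [simp]: "sw m 0 = 1"
  by (simp add: sw_def)

lemma sw_Suc_0 [simp]: "sw m (Suc 0) = 0"
  by (simp add: sw_def)

lemma SqW_2:
  assumes "2 \<le> i"
  shows "SqW m 2 i = sw m 2 * sw m i + of_nat ((i - 1) choose 2) * sw m (i + 2)"
proof -
  have "i - 2 + 2 - 1 = i - 1" "i - 2 + 0 - 1 = i - 3"
    using assms by arith+
  then show ?thesis
    using assms by (simp add: SqW_def eval_nat_numeral sum.atLeast0_atMost_Suc One_nat_def)
qed

lemma SqW_3:
  assumes "3 \<le> i"
  shows "SqW m 3 i = sw m 3 * sw m i + sw m 2 * (of_nat (i - 3) * sw m (i + 1))
     + of_nat ((i - 1) choose 3) * sw m (i + 3)"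
proof -
  have "i - 3 + 1 - 1 = i - 3" "i - 3 + 2 - 1 = i - 2" "i - 3 + 3 - 1 = i - 1" "i - 3 + 0 - 1 = i - 4"
    using assms by arith+
  then show ?thesis
    using assms by (simp add: SqW_def eval_nat_numeral sum.atLeast0_atMost_Suc One_nat_def mult_ac)
qed

lemma of_nat_mult_sw_below_top: "(a = m \<Longrightarrow> even c) \<Longrightarrow> of_nat c * sw m a \<in> HBSO (m - 1)"
  by (cases "a = m") (simp_all add: of_nat_poly HBSO_mult HBSO_sw_below_top)

lemma Q0_Var_below_top:
  assumes "i \<in> {2..2 * n - 1}"
  shows "Q0 (2 * n) (Var i) \<in> HBSO (2 * n - 1)"
proof -
  have "Var i = sw (2 * n) i"
    using assms by (auto simp: sw_def)
  then have "Q0 (2 * n) (Var i) = of_nat (i - 1) * sw (2 * n) (i + 1)"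
    by (simp add: Q0_def Sq_1_sw)
  also have "\<dots> \<in> HBSO (2 * n - 1)"
    by (rule of_nat_mult_sw_below_top) presburger
  finally show ?thesis .
qed

lemma Q0_top_Var: "Q0 m (Var m) = 0"
proof (cases "m = 0")
  case True
  then show ?thesis by (simp add: Q0_def Sq_Var SqW_def)
next
  case False
  then show ?thesis by (simp add: Q0_def Sq_Var SqW_1 sw_def)
qed

lemma Q1_Var: "2 \<le> i \<Longrightarrow> Q1 m (Var i) = SqW m 3 i + of_nat (i - 1) * Sq m 2 (sw m (i + 1))"
  by (simp add: Q1_def Sq_Var SqW_1 Sq_of_nat_mult)

lemma Q1_Var_below_top:
  assumes "2 \<le> n" "i \<in> {2..2 * n - 1}"
  shows "Q1 (2 * n) (Var i) \<in> HBSO (2 * n - 1)"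
proof -
  let ?m = "2 * n"
  from assms(2) have i: "2 \<le> i" "i < ?m" by auto
  \<comment> \<open>w_2n can only occur as w_(i+1) or w_(i+3), and then with an even coefficient\<close>
  have Sq_3: "SqW ?m 3 i \<in> HBSO (?m - 1)"
  proof (cases "3 \<le> i")
    case True
    have "even ((i - 1) choose 3)" if "i + 3 = ?m"
    proof -
      from that assms(1) have "i - 1 = 2 * (n - 2)" by arith
      then show ?thesis using even_choose_3 by simp
    qed
    then show ?thesis
      unfolding SqW_3[OF True] using i assms(1)
      by (intro HBSO_add of_nat_mult_sw_below_top HBSO_mult HBSO_sw_below_top) presburger+
  qed (simp add: SqW_def)
  have Sq_2_Sq_1: "of_nat (i - 1) * Sq ?m 2 (sw ?m (i + 1)) \<in> HBSO (?m - 1)"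
  proof (cases "even (i - 1)")
    case False
    then have "i + 1 < ?m" using i by presburger
    then have "Sq ?m 2 (sw ?m (i + 1)) = SqW ?m 2 (i + 1)"
      using i by (simp add: sw_def Sq_Var)
    also have "\<dots> \<in> HBSO (?m - 1)"
      unfolding SqW_2[of "i + 1", OF trans_le_add1[OF i(1)]] using False i assms(1)
      by (intro HBSO_add of_nat_mult_sw_below_top HBSO_mult HBSO_sw_below_top) presburger+
    finally show ?thesis by (intro HBSO_mult HBSO_of_nat)
  qed (simp add: of_nat_poly)
  show ?thesis
    using assms Sq_3 Sq_2_Sq_1 by (simp add: Q1_Var HBSO_add)
qed

lemma Q1_top_Var: "2 \<le> n \<Longrightarrow> Q1 (2 * n) (Var (2 * n)) = Var 3 * Var (2 * n)"
  by (simp add: Q1_Var SqW_3 sw_def)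

lemma derivation_on_Milnor_primitive: "D \<in> {Q0 m, Q1 m} \<Longrightarrow> derivation_on m D"
  using derivation_on_Q0 derivation_on_Q1 by blast

lemma Milnor_primitive_Var_below_top:
  "2 \<le> n \<Longrightarrow> D \<in> {Q0 (2 * n), Q1 (2 * n)} \<Longrightarrow> i \<in> {2..2 * n - 1} \<Longrightarrow> D (Var i) \<in> HBSO (2 * n - 1)"
  using Q0_Var_below_top Q1_Var_below_top by blast

lemma Milnor_primitive_top_Var:
  assumes "2 \<le> n" "D \<in> {Q0 (2 * n), Q1 (2 * n)}"
  shows "\<exists>s\<in>HBSO (2 * n - 1). D (Var (2 * n)) = s * Var (2 * n)"
proof -
  from assms(2) consider "D = Q0 (2 * n)" | "D = Q1 (2 * n)" by blast
  then show ?thesis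
  proof cases
    case 1
    then show ?thesis using Q0_top_Var by (intro bexI[of _ 0]) simp_all
  next
    case 2
    then show ?thesis using assms(1) Q1_top_Var by (intro bexI[of _ "Var 3"]) (simp_all add: HBSO_Var)
  qed
qed

lemma lookup_Milnor_primitive_zero: "D \<in> {Q0 m, Q1 m} \<Longrightarrow> Poly_Mapping.lookup (D x) 0 = 0"
  unfolding Q0_def Q1_def by (elim insertE) (simp_all add: lookup_add lookup_Sq_zero)

lemma Milnor_primitive_HBSO_red_below_top:
  assumes "2 \<le> n" and D: "D \<in> {Q0 (2 * n), Q1 (2 * n)}" and "x \<in> HBSO_red (2 * n - 1)"
  shows "D x \<in> HBSO_red (2 * n - 1)"
proof -
  from \<open>x \<in> HBSO_red (2 * n - 1)\<close> have "x \<in> HBSO (2 * n - 1)"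
    by (simp add: HBSO_red_def)
  then have "D x \<in> HBSO (2 * n - 1)"
    using derivation_on_HBSO[OF derivation_on_Milnor_primitive[OF D] _
        Milnor_primitive_Var_below_top[OF assms(1) D]] by simp
  then show ?thesis
    using lookup_Milnor_primitive_zero[OF D] by (simp add: HBSO_red_def)
qed

lemma Milnor_primitive_mult_top_power:
  assumes "2 \<le> n" and D: "D \<in> {Q0 (2 * n), Q1 (2 * n)}" and q: "q \<in> HBSO (2 * n - 1)"
  shows "D (q * Var (2 * n) ^ k) \<in> {q' * Var (2 * n) ^ k | q'. q' \<in> HBSO (2 * n - 1)}"
proof -
  note der = derivation_on_Milnor_primitive[OF D]
  obtain s where s: "s \<in> HBSO (2 * n - 1)" and Dw: "D (Var (2 * n)) = s * Var (2 * n)"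
    using Milnor_primitive_top_Var[OF assms(1) D] by blast
  have "q \<in> HBSO (2 * n)"
    using q HBSO_mono[of "2 * n - 1" "2 * n"] by auto
  moreover have "Var (2 * n) \<in> HBSO (2 * n)"
    using assms(1) by (simp add: HBSO_Var)
  ultimately have "D (q * Var (2 * n) ^ k) = (D q + of_nat k * s * q) * Var (2 * n) ^ k"
    by (rule derivation_on_mult_power[OF der _ _ Dw])
  moreover have "D q + of_nat k * s * q \<in> HBSO (2 * n - 1)"
    using derivation_on_HBSO[OF der _ Milnor_primitive_Var_below_top[OF assms(1) D] q] s q
    by (simp add: HBSO_add HBSO_mult)
  ultimately show ?thesis by blast
qed

lemma E_submodule_HBSO_red_below_top:
  assumes "2 \<le> n"
  shows "E_submodule (2 * n) (HBSO_red (2 * n - 1))"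
  unfolding E_submodule_def
proof (intro conjI ballI)
  show "HBSO_red (2 * n - 1) \<subseteq> HBSO_red (2 * n)"
    using HBSO_mono[of "2 * n - 1" "2 * n"] by (auto simp: HBSO_red_def)
  show "0 \<in> HBSO_red (2 * n - 1)"
    by (simp add: HBSO_red_def)
  show "x + y \<in> HBSO_red (2 * n - 1)" if "x \<in> HBSO_red (2 * n - 1)" "y \<in> HBSO_red (2 * n - 1)" for x y
    using that by (simp add: HBSO_red_def HBSO_add lookup_add)
  show "Q0 (2 * n) x \<in> HBSO_red (2 * n - 1)" "Q1 (2 * n) x \<in> HBSO_red (2 * n - 1)"
    if "x \<in> HBSO_red (2 * n - 1)" for x
    using Milnor_primitive_HBSO_red_below_top[OF assms _ that] by simp_all
qed

lemma E_submodule_top_power_multiples: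
  assumes "2 \<le> n" and "1 \<le> k"
  shows "E_submodule (2 * n) {q * sw (2 * n) (2 * n) ^ k | q. q \<in> HBSO (2 * n - 1)}"
proof -
  let ?w = "Var (2 * n)"
  let ?M = "{q * ?w ^ k | q. q \<in> HBSO (2 * n - 1)}"
  have sw: "sw (2 * n) (2 * n) = ?w"
    using assms(1) by (simp add: sw_def)
  show ?thesis
    unfolding E_submodule_def sw
  proof (intro conjI ballI)
    show "?M \<subseteq> HBSO_red (2 * n)"
    proof
      fix p assume "p \<in> ?M"
      then obtain q where q: "q \<in> HBSO (2 * n - 1)" and p: "p = q * ?w ^ k" by blast
      have "q \<in> HBSO (2 * n)"
        using q HBSO_mono[of "2 * n - 1" "2 * n"] by auto
      moreover have "?w \<in> HBSO (2 * n)"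
        using assms(1) by (simp add: HBSO_Var)
      ultimately have "p \<in> HBSO (2 * n)"
        unfolding p by (intro HBSO_mult HBSO_power)
      moreover have "Poly_Mapping.lookup p 0 = 0"
        unfolding p using assms(2) by (simp add: lookup_mult_zero lookup_power_zero lookup_Var_zero)
      ultimately show "p \<in> HBSO_red (2 * n)" by (simp add: HBSO_red_def)
    qed
    show "0 \<in> ?M"
      using HBSO_zero by (intro CollectI exI[of _ 0]) simp
    show "x + y \<in> ?M" if "x \<in> ?M" "y \<in> ?M" for x y
    proof -
      from that obtain q q' where "q \<in> HBSO (2 * n - 1)" "q' \<in> HBSO (2 * n - 1)"
        and "x = q * ?w ^ k" "y = q' * ?w ^ k" by blast
      then show ?thesis
        by (intro CollectI exI[of _ "q + q'"]) (simp add: distrib_right HBSO_add)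
    qed
    show "Q0 (2 * n) x \<in> ?M" "Q1 (2 * n) x \<in> ?M" if "x \<in> ?M" for x
    proof -
      from that obtain q where q: "q \<in> HBSO (2 * n - 1)" and x: "x = q * ?w ^ k" by blast
      show "Q0 (2 * n) x \<in> ?M" "Q1 (2 * n) x \<in> ?M"
        unfolding x using Milnor_primitive_mult_top_power[OF assms(1) _ q] by simp_all
    qed
  qed
qed

theorem lemma1:
  fixes n :: nat
  assumes "n \<ge> 2"
  shows "(\<forall>k::nat. k \<ge> 1 \<longrightarrow>
            E_submodule (2*n) {q * sw (2*n) (2*n) ^ k | q. q \<in> HBSO (2*n - 1)})
         \<and> E_submodule (2*n) (HBSO_red (2*n - 1))"
  using assms E_submodule_top_power_multiples E_submodule_HBSO_red_below_top by blast

end
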